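(* For every Hessenberg function $h$ on $\{1,\dots,n\}$, the $\mathbb{Q}$-linear extension $\Phi:M^{h,(n)}\to\operatorname{span}_{\mathbb{Q}}\mathcal{A}_h((n))$ is an isomorphism of graded vector spaces; equivalently, $\Phi$ is a degree-preserving bijection from the set of $(h,(n))$-fillings onto $\mathcal{A}_h((n))=\mathcal{B}_h$.
   Context: A Hessenberg function is $h:\{1,\dots,n\}\to\{1,\dots,n\}$, $h_i=h(i)$, with $i\le h_i$ and $h_i\le h_{i+1}$; degree tuple $\beta_i=i-\#\{k:h_k<i\}$; $\mathcal{B}_h=\{x_1^{\alpha_1}\cdots x_n^{\alpha_n}:0\le\alpha_i\le\beta_i-1\}$. An $(h,(n))$-filling is a permutation $T=w_1\cdots w_n$ of $1,\dots,n$ in one row with $w_t\le h(w_{t+1})$ for all $t$. A dimension pair of $T$ is $(a,b)$ with $b>a$, $b$ to the left of $a$, and, if $a$ is immediately followed by $c$, $b\le h(c)$. $\Phi(T)=\prod_{j=2}^n x_j^{|D^T_j|}$ with $D^T_j$ the set of dimension pairs $(a,j)$; $\mathcal{A}_h((n))$ is the set of all $\Phi(T)$. $M^{h,(n)}$ is the formal $\mathbb{Q}$-span of the $(h,(n))$-fillings, graded by number of dimension pairs; the span of monomials is graded by degree. *)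

theory Defs
  imports Main
begin

text \<open>Hessenberg function on {1..n}, encoded as h :: nat => nat (values outside {1..n} irrelevant).\<close>
definition hessenberg :: "nat \<Rightarrow> (nat \<Rightarrow> nat) \<Rightarrow> bool" where
  "hessenberg n h \<longleftrightarrow>
     (\<forall>i\<in>{1..n}. i \<le> h i \<and> h i \<le> n) \<and> (\<forall>i. 1 \<le> i \<and> i < n \<longrightarrow> h i \<le> h (Suc i))"

definition degtuple :: "nat \<Rightarrow> (nat \<Rightarrow> nat) \<Rightarrow> nat \<Rightarrow> nat" where
  "degtuple n h i = i - card {k\<in>{1..n}. h k < i}"

text \<open>Monomials x_1^a_1 ... x_n^a_n are encoded by their exponent vectors
  alpha :: nat => nat, supported on {1..n}.\<close>
definition monomials :: "nat \<Rightarrow> (nat \<Rightarrow> nat) set" where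
  "monomials n = {\<alpha>. \<forall>i. i \<notin> {1..n} \<longrightarrow> \<alpha> i = 0}"

definition Bh :: "nat \<Rightarrow> (nat \<Rightarrow> nat) \<Rightarrow> (nat \<Rightarrow> nat) set" where
  "Bh n h = {\<alpha> \<in> monomials n. \<forall>i\<in>{1..n}. \<alpha> i \<le> degtuple n h i - 1}"

text \<open>One-row (h,(n))-fillings T = w_1 ... w_n, as lists (0-indexed positions).\<close>
definition fillings :: "nat \<Rightarrow> (nat \<Rightarrow> nat) \<Rightarrow> nat list set" where
  "fillings n h = {w. distinct w \<and> set w = {1..n} \<and>
                     (\<forall>t. Suc t < length w \<longrightarrow> w ! t \<le> h (w ! Suc t))}"

definition dimpairs :: "(nat \<Rightarrow> nat) \<Rightarrow> nat list \<Rightarrow> (nat \<times> nat) set" where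
  "dimpairs h w = {(w ! j, w ! i) | i j. i < j \<and> j < length w \<and> w ! j < w ! i \<and>
                     (Suc j < length w \<longrightarrow> w ! i \<le> h (w ! Suc j))}"

definition Phi :: "nat \<Rightarrow> (nat \<Rightarrow> nat) \<Rightarrow> nat list \<Rightarrow> (nat \<Rightarrow> nat)" where
  "Phi n h w = (\<lambda>j. if 2 \<le> j \<and> j \<le> n then card {p \<in> dimpairs h w. snd p = j} else 0)"

definition Ah :: "nat \<Rightarrow> (nat \<Rightarrow> nat) \<Rightarrow> (nat \<Rightarrow> nat) set" where
  "Ah n h = Phi n h ` fillings n h"

definition mdeg :: "nat \<Rightarrow> (nat \<Rightarrow> nat) \<Rightarrow> nat" where
  "mdeg n \<alpha> = (\<Sum>i\<in>{1..n}. \<alpha> i)"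

end

theory Submission
  imports Defs
begin

(*
  Proof idea: induction on n, removing the largest letter n+1 = Suc m.

  Deleting Suc m from an (h, Suc m)-filling leaves a filling for the truncated
  Hessenberg function  trunc m h = min h m  on {1..m}; conversely Suc m may be
  inserted into such a filling w' exactly at the "slots" s (the end, or just before
  a letter c with h c = Suc m).  So insertion is a bijection from the pairs (w', s)
  onto the (h, Suc m)-fillings, and the number of slots is beta_(Suc m).

  Inserting Suc m at slot s keeps all dimension pairs of w' and adds one pair
  (c, Suc m) for every slot to the right of s.  Hence Phi of the new filling is
  Phi w' extended by the exponent  rank s = #{slots right of s}, and rank is a
  bijection from the slots onto {0..<beta_(Suc m)}.  Since B_h splits the same way
  (exponent of x_(Suc m) below beta_(Suc m), the rest in B_(trunc m h)), the induction
  hypothesis gives that Phi is a bijection onto B_h.  The degree statement is a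
  regrouping of the dimension pairs by their larger entry.
*)

definition ins :: "nat \<Rightarrow> 'a \<Rightarrow> 'a list \<Rightarrow> 'a list" where
  "ins s x xs = take s xs @ x # drop s xs"

lemma length_ins: "s \<le> length xs \<Longrightarrow> length (ins s x xs) = Suc (length xs)"
  by (simp add: ins_def)

lemma nth_ins: "s \<le> length xs \<Longrightarrow>
  ins s x xs ! i = (if i < s then xs ! i else if i = s then x else xs ! (i - 1))"
  by (auto simp: ins_def nth_append nth_Cons' min_def)

lemma set_ins: "set (ins s x xs) = insert x (set xs)"
  by (metis ins_def append_take_drop_id set_append set_simps(2) Un_insert_right)

lemma distinct_ins: "distinct (ins s x xs) \<longleftrightarrow> distinct xs \<and> x \<notin> set xs"
proof -
  have move_front: "distinct (A @ x # B) \<longleftrightarrow> distinct (x # A @ B)" for A B :: "'a list"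
    by auto
  show ?thesis
    unfolding ins_def move_front by (simp only: append_take_drop_id) auto
qed

lemma ins_delete: "s < length w \<Longrightarrow> w = ins s (w ! s) (take s w @ drop (Suc s) w)"
  by (simp add: ins_def id_take_nth_drop min_def)

text \<open>A fresh element determines its insertion position, so insertion is injective.\<close>
lemma ins_inj:
  assumes "x \<notin> set xs" "x \<notin> set ys" "s \<le> length xs" "t \<le> length ys"
    and eq: "ins s x xs = ins t x ys"
  shows "s = t \<and> xs = ys"
proof -
  have pos: "ins s x xs ! s = x" "ins t x ys ! t = x"
    using assms(3,4) by (simp_all add: nth_ins)
  have "s = t"
  proof (rule ccontr)
    assume "s \<noteq> t"
    then consider "s < t" | "t < s" by linarith
    then show False
    proof cases
      case 1
      then have "ins t x ys ! s = ys ! s" using assms(4) by (simp add: nth_ins)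
      then show False using 1 pos assms(2,4) eq by (metis nth_mem order_less_le_trans)
    next
      case 2
      then have "ins s x xs ! t = xs ! t" using assms(3) by (simp add: nth_ins)
      then show False using 2 pos assms(1,3) eq by (metis nth_mem order_less_le_trans)
    qed
  qed
  moreover have "xs = ys"
    using eq assms(3,4) \<open>s = t\<close> unfolding ins_def
    by (metis append_eq_append_conv append_take_drop_id length_take list.inject min.absorb2)
  ultimately show ?thesis ..
qed

lemma hessenberg_top: "hessenberg (Suc m) h \<Longrightarrow> h (Suc m) = Suc m"
  unfolding hessenberg_def by (metis atLeastAtMost_iff le_antisym le_add1 plus_1_eq_Suc order_refl)

lemma hessenberg_le: "hessenberg n h \<Longrightarrow> x \<in> {1..n} \<Longrightarrow> h x \<le> n"
  unfolding hessenberg_def by blast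

lemma length_filling: "w \<in> fillings n h \<Longrightarrow> length w = n"
  unfolding fillings_def by (metis (mono_tags, lifting) card_atLeastAtMost diff_Suc_1 distinct_card mem_Collect_eq)

lemma nth_filling: "w \<in> fillings n h \<Longrightarrow> k < n \<Longrightarrow> w ! k \<in> {1..n}"
  using length_filling[of w n h] unfolding fillings_def by (metis (mono_tags, lifting) mem_Collect_eq nth_mem)

definition is_dimpair :: "(nat \<Rightarrow> nat) \<Rightarrow> nat list \<Rightarrow> nat \<Rightarrow> nat \<Rightarrow> bool" where
  "is_dimpair h w i j \<longleftrightarrow> i < j \<and> j < length w \<and> w ! j < w ! i \<and>
     (Suc j < length w \<longrightarrow> w ! i \<le> h (w ! Suc j))"

lemma dimpairs_eq: "dimpairs h w = {(w ! j, w ! i) | i j. is_dimpair h w i j}"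
  unfolding dimpairs_def is_dimpair_def by blast

lemma dimpair_entries:
  assumes "p \<in> dimpairs h w"
  shows "fst p \<in> set w \<and> snd p \<in> set w \<and> fst p < snd p"
  using assms unfolding dimpairs_def by auto

subsection \<open>Truncation and insertion slots\<close>

definition trunc :: "nat \<Rightarrow> (nat \<Rightarrow> nat) \<Rightarrow> nat \<Rightarrow> nat" where
  "trunc m h i = min (h i) m"

lemma hessenberg_trunc:
  assumes "hessenberg (Suc m) h"
  shows "hessenberg m (trunc m h)"
  using assms unfolding hessenberg_def trunc_def
  by (auto simp: min_def)

lemma degtuple_trunc:
  assumes "hessenberg (Suc m) h" and "i \<in> {1..m}"
  shows "degtuple m (trunc m h) i = degtuple (Suc m) h i"
proof -
  have "{k \<in> {1..m}. trunc m h k < i} = {k \<in> {1..Suc m}. h k < i}"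
    using assms hessenberg_top[OF assms(1)] by (auto simp: trunc_def le_Suc_eq)
  then show ?thesis by (simp add: degtuple_def)
qed

lemma degtuple_top:
  assumes H: "hessenberg (Suc m) h"
  shows "degtuple (Suc m) h (Suc m) = Suc (card {k \<in> {1..m}. h k = Suc m})"
proof -
  let ?A = "{k \<in> {1..Suc m}. h k < Suc m}"
  let ?B = "{k \<in> {1..Suc m}. h k = Suc m}"
  have "k \<in> ?A \<union> ?B" if "k \<in> {1..Suc m}" for k
    using hessenberg_le[OF H that] that by auto
  then have partition: "?A \<union> ?B = {1..Suc m}" by blast
  have "card ?A + card ?B = card (?A \<union> ?B)"
    by (rule card_Un_disjoint[symmetric]) auto
  then have "card ?A + card ?B = Suc m" unfolding partition by simp
  moreover have "?B = insert (Suc m) {k \<in> {1..m}. h k = Suc m}"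
    using hessenberg_top[OF H] by auto
  ultimately show ?thesis unfolding degtuple_def by simp
qed

text \<open>Positions of a word over {1..m} where the letter Suc m may be inserted:
  at the end, or in front of a letter c with h c = Suc m.\<close>
definition slots :: "nat \<Rightarrow> (nat \<Rightarrow> nat) \<Rightarrow> nat list \<Rightarrow> nat set" where
  "slots m h w' = {s. s \<le> m \<and> (s < m \<longrightarrow> h (w' ! s) = Suc m)}"

lemma slot_le: "s \<in> slots m h w' \<Longrightarrow> s \<le> m"
  by (simp add: slots_def)

lemma finite_slots: "finite (slots m h w')"
  by (rule finite_subset[of _ "{..m}"]) (auto simp: slots_def)

lemma card_slots:
  assumes H: "hessenberg (Suc m) h" and W: "w' \<in> fillings m (trunc m h)"
  shows "card (slots m h w') = degtuple (Suc m) h (Suc m)"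
proof -
  have len: "length w' = m" and d: "distinct w'" and st: "set w' = {1..m}"
    using W length_filling[OF W] by (auto simp: fillings_def)
  let ?P = "{s. s < m \<and> h (w' ! s) = Suc m}"
  have "card ?P = card {k \<in> {1..m}. h k = Suc m}"
  proof -
    have "nth w' ` ?P = {k \<in> {1..m}. h k = Suc m}"
    proof
      show "nth w' ` ?P \<subseteq> {k \<in> {1..m}. h k = Suc m}"
        using st len nth_mem by blast
      show "{k \<in> {1..m}. h k = Suc m} \<subseteq> nth w' ` ?P"
      proof
        fix k assume k: "k \<in> {k \<in> {1..m}. h k = Suc m}"
        then obtain i where "i < m" "w' ! i = k" using st len by (metis in_set_conv_nth mem_Collect_eq)
        then show "k \<in> nth w' ` ?P" using k by blast
      qed
    qed
    moreover have "inj_on (nth w') ?P" by (rule inj_on_nth[OF d]) (simp add: len)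
    ultimately show ?thesis using card_image by fastforce
  qed
  moreover have "slots m h w' = insert m ?P" by (auto simp: slots_def)
  moreover have "finite ?P" by (rule finite_subset[of _ "{..<m}"]) auto
  ultimately show ?thesis using degtuple_top[OF H] by simp
qed

definition rank :: "nat set \<Rightarrow> nat \<Rightarrow> nat" where
  "rank V s = card {x \<in> V. s < x}"

lemma rank_strict_antimono:
  assumes "finite V" "b \<in> V" "a < b"
  shows "rank V b < rank V a"
proof -
  have "{x \<in> V. b < x} \<subset> {x \<in> V. a < x}" using assms by auto
  then show ?thesis unfolding rank_def by (simp add: assms(1) psubset_card_mono)
qed

lemma bij_rank:
  assumes "finite V"
  shows "bij_betw (rank V) V {..<card V}"
proof -
  have inj: "inj_on (rank V) V"
  proof (rule inj_onI)
    fix a b assume "a \<in> V" "b \<in> V" "rank V a = rank V b"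
    then show "a = b"
      using rank_strict_antimono[OF assms] by (metis less_irrefl nat_neq_iff)
  qed
  have "rank V a < card V" if "a \<in> V" for a
  proof -
    have "{x \<in> V. a < x} \<subset> V" using that by auto
    then show ?thesis unfolding rank_def by (simp add: assms psubset_card_mono)
  qed
  then have "rank V ` V \<subseteq> {..<card V}" by auto
  moreover have "card (rank V ` V) = card {..<card V}"
    using card_image[OF inj] by simp
  ultimately have "rank V ` V = {..<card V}"
    by (simp add: card_subset_eq)
  with inj show ?thesis by (simp add: bij_betw_def)
qed

subsection \<open>Inserting the largest letter into a filling\<close>

text \<open>Position in the enlarged word of the letter at position k of the old word.\<close>
definition ipos :: "nat \<Rightarrow> nat \<Rightarrow> nat" where
  "ipos s k = (if k < s then k else Suc k)"

lemma ipos_cases: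
  assumes "k < Suc m" "k \<noteq> s" "s \<le> m"
  obtains k' where "k' < m" "k = ipos s k'"
proof
  show "(if k < s then k else k - 1) < m" using assms by auto
  show "k = ipos s (if k < s then k else k - 1)" using assms by (auto simp: ipos_def)
qed

lemma ipos_less_iff: "ipos s i < ipos s j \<longleftrightarrow> i < j"
  by (auto simp: ipos_def)

context
  fixes m :: nat and h :: "nat \<Rightarrow> nat" and w' :: "nat list" and s :: nat
  assumes hess: "hessenberg (Suc m) h"
    and filling: "w' \<in> fillings m (trunc m h)"
    and slot: "s \<in> slots m h w'"
begin

lemma length_ins_filling: "length (ins s (Suc m) w') = Suc m"
  using length_ins[of s w'] slot_le[OF slot] length_filling[OF filling] by simp

lemma nth_ins_filling:
  "ins s (Suc m) w' ! k = (if k < s then w' ! k else if k = s then Suc m else w' ! (k - 1))"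
  using nth_ins[of s w' "Suc m"] slot_le[OF slot] length_filling[OF filling] by simp

lemma nth_ins_ipos: "ins s (Suc m) w' ! ipos s k = w' ! k"
  by (simp add: nth_ins_filling ipos_def)

lemma h_old_letter: "k < m \<Longrightarrow> h (w' ! k) \<le> Suc m"
  using hessenberg_le[OF hess] nth_filling[OF filling] by (meson atLeastAtMost_iff le_SucI)

lemma ins_filling: "ins s (Suc m) w' \<in> fillings (Suc m) h"
proof -
  let ?w = "ins s (Suc m) w'"
  have adj: "w' ! t \<le> min (h (w' ! Suc t)) m" if "Suc t < m" for t
    using filling that length_filling[OF filling] by (auto simp: fillings_def trunc_def)
  have small: "w' ! t \<le> m" if "t < m" for t
    using nth_filling[OF filling that] by simp
  have "?w ! t \<le> h (?w ! Suc t)" if t: "Suc t < Suc m" for t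
  proof -
    consider "Suc t < s" | "Suc t = s" | "t = s" | "s < t" by linarith
    then show ?thesis
    proof cases
      case 1 then show ?thesis using adj[of t] slot_le[OF slot] by (simp add: nth_ins_filling)
    next
      case 2 then show ?thesis using small[of t] slot_le[OF slot] hessenberg_top[OF hess]
        by (simp add: nth_ins_filling)
    next
      case 3 then show ?thesis using t slot by (simp add: nth_ins_filling slots_def)
    next
      case 4 then show ?thesis using adj[of "t - 1"] t by (simp add: nth_ins_filling)
    qed
  qed
  moreover have "distinct ?w" and "set ?w = {1..Suc m}"
    using filling by (auto simp: fillings_def distinct_ins set_ins)
  ultimately show ?thesis
    using length_ins_filling by (simp add: fillings_def)
qed

text \<open>For an old position j, the follower condition of a dimension pair with larger
  entry v is the same in the enlarged word (for h) and in the old word (for trunc m h):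
  if Suc m now follows j, both conditions hold trivially.\<close>
lemma follower_condition:
  assumes j: "j < m" and v: "v \<le> m"
  shows "(Suc (ipos s j) < Suc m \<longrightarrow> v \<le> h (ins s (Suc m) w' ! Suc (ipos s j))) \<longleftrightarrow>
         (Suc j < m \<longrightarrow> v \<le> trunc m h (w' ! Suc j))"
proof (cases "Suc j = s")
  case True
  then show ?thesis
    using v slot hessenberg_top[OF hess] by (auto simp: ipos_def nth_ins_filling slots_def trunc_def)
next
  case False
  then have next_pos: "Suc (ipos s j) = ipos s (Suc j)" by (auto simp: ipos_def)
  have "ipos s (Suc j) < Suc m \<longleftrightarrow> Suc j < m"
    using False j slot_le[OF slot] by (auto simp: ipos_def)
  then show ?thesis
    unfolding next_pos nth_ins_ipos trunc_def using v by auto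
qed

lemma is_dimpair_old:
  assumes "i < m" "j < m"
  shows "is_dimpair h (ins s (Suc m) w') (ipos s i) (ipos s j) \<longleftrightarrow> is_dimpair (trunc m h) w' i j"
proof -
  have "w' ! i \<le> m" using nth_filling[OF filling assms(1)] by simp
  moreover have "ipos s j < Suc m" using assms(2) slot_le[OF slot] by (auto simp: ipos_def)
  ultimately show ?thesis
    using follower_condition[OF assms(2), of "w' ! i"] assms length_filling[OF filling]
    unfolding is_dimpair_def length_ins_filling nth_ins_ipos ipos_less_iff by auto
qed

lemma is_dimpair_new: "is_dimpair h (ins s (Suc m) w') s t \<longleftrightarrow> s < t \<and> t \<in> slots m h w'"
proof (cases "s < t \<and> t < Suc m")
  case True
  then have entries: "ins s (Suc m) w' ! s = Suc m" "ins s (Suc m) w' ! t = w' ! (t - 1)"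
    "ins s (Suc m) w' ! Suc t = w' ! t"
    by (auto simp: nth_ins_filling)
  have "t - 1 < m" using True by linarith
  then have "w' ! (t - 1) < Suc m"
    using nth_filling[OF filling, of "t - 1"] by auto
  moreover have "t < m \<Longrightarrow> Suc m \<le> h (w' ! t) \<longleftrightarrow> h (w' ! t) = Suc m"
    using h_old_letter by fastforce
  ultimately show ?thesis
    using True unfolding is_dimpair_def length_ins_filling entries slots_def by auto
next
  case False
  then show ?thesis by (auto simp: is_dimpair_def length_ins_filling slots_def)
qed

lemma not_is_dimpair_top: "\<not> is_dimpair h (ins s (Suc m) w') i s"
proof
  assume "is_dimpair h (ins s (Suc m) w') i s"
  then have "i < Suc m" and "Suc m < ins s (Suc m) w' ! i"
    using slot_le[OF slot] by (auto simp: is_dimpair_def nth_ins_filling length_ins_filling)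
  then show False using nth_filling[OF ins_filling] by fastforce
qed

lemma dimpairs_ins:
  "dimpairs h (ins s (Suc m) w') =
     dimpairs (trunc m h) w' \<union> (\<lambda>t. (w' ! (t - 1), Suc m)) ` {t \<in> slots m h w'. s < t}"
  (is "dimpairs h ?w = ?old \<union> ?new")
proof
  show "dimpairs h ?w \<subseteq> ?old \<union> ?new"
  proof
    fix p assume "p \<in> dimpairs h ?w"
    then obtain i j where p: "p = (?w ! j, ?w ! i)" and ij: "is_dimpair h ?w i j"
      unfolding dimpairs_eq by blast
    show "p \<in> ?old \<union> ?new"
    proof (cases "i = s")
      case True
      then have "p \<in> ?new" using ij p by (auto simp: is_dimpair_new nth_ins_filling)
      then show ?thesis ..
    next
      case False
      have "j \<noteq> s" using ij not_is_dimpair_top by blast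
      moreover have "i < Suc m" "j < Suc m" using ij by (auto simp: is_dimpair_def length_ins_filling)
      ultimately obtain i' j' where "i' < m" "i = ipos s i'" "j' < m" "j = ipos s j'"
        using False slot_le[OF slot] ipos_cases by metis
      then have "p \<in> ?old"
        using ij p is_dimpair_old unfolding dimpairs_eq by (auto simp: nth_ins_ipos)
      then show ?thesis ..
    qed
  qed
  show "?old \<union> ?new \<subseteq> dimpairs h ?w"
  proof
    fix p assume "p \<in> ?old \<union> ?new"
    then show "p \<in> dimpairs h ?w"
    proof
      assume "p \<in> ?old"
      then obtain i j where p: "p = (w' ! j, w' ! i)" and ij: "is_dimpair (trunc m h) w' i j"
        unfolding dimpairs_eq by blast
      then have "i < m" "j < m" using length_filling[OF filling] by (auto simp: is_dimpair_def)
      then have "is_dimpair h ?w (ipos s i) (ipos s j)" using ij is_dimpair_old by blast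
      then have "(?w ! ipos s j, ?w ! ipos s i) \<in> dimpairs h ?w" unfolding dimpairs_eq by blast
      then show ?thesis using p by (simp add: nth_ins_ipos)
    next
      assume "p \<in> ?new"
      then obtain t where p: "p = (w' ! (t - 1), Suc m)" and t: "s < t" "t \<in> slots m h w'"
        by blast
      then have "is_dimpair h ?w s t" using is_dimpair_new by blast
      then have "(?w ! t, ?w ! s) \<in> dimpairs h ?w" unfolding dimpairs_eq by blast
      then show ?thesis using p t by (simp add: nth_ins_filling)
    qed
  qed
qed

lemma Phi_ins:
  "Phi (Suc m) h (ins s (Suc m) w') = (Phi m (trunc m h) w')(Suc m := rank (slots m h w') s)"
proof
  fix j
  let ?old = "dimpairs (trunc m h) w'"
  let ?new = "(\<lambda>t. (w' ! (t - 1), Suc m)) ` {t \<in> slots m h w'. s < t}"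
  have old_snd: "snd p \<in> {2..m}" if "p \<in> ?old" for p
    using dimpair_entries[OF that] filling by (force simp: fillings_def)
  show "Phi (Suc m) h (ins s (Suc m) w') j = ((Phi m (trunc m h) w')(Suc m := rank (slots m h w') s)) j"
  proof (cases "j = Suc m")
    case True
    have "inj_on (\<lambda>t. (w' ! (t - 1), Suc m)) {t \<in> slots m h w'. s < t}"
    proof (rule inj_onI)
      fix t u assume "t \<in> {t \<in> slots m h w'. s < t}" "u \<in> {t \<in> slots m h w'. s < t}"
        and "(w' ! (t - 1), Suc m) = (w' ! (u - 1), Suc m)"
      moreover have "distinct w'" using filling by (simp add: fillings_def)
      ultimately show "t = u"
        using length_filling[OF filling] by (auto simp: slots_def nth_eq_iff_index_eq)
    qed
    then have "card ?new = rank (slots m h w') s" unfolding rank_def by (rule card_image)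
    moreover have "{p \<in> ?old \<union> ?new. snd p = Suc m} = ?new" using old_snd by force
    moreover have "1 \<le> m \<or> rank (slots m h w') s = 0"
      using slot by (auto simp: rank_def slots_def)
    ultimately show ?thesis using True by (auto simp: Phi_def dimpairs_ins)
  next
    case False
    then have "{p \<in> ?old \<union> ?new. snd p = j} = {p \<in> ?old. snd p = j}" by auto
    then show ?thesis using False by (auto simp: Phi_def dimpairs_ins le_Suc_eq)
  qed
qed

end

lemma filling_decompose:
  assumes H: "hessenberg (Suc m) h" and W: "w \<in> fillings (Suc m) h"
  obtains w' s where "w' \<in> fillings m (trunc m h)" "s \<in> slots m h w'" "w = ins s (Suc m) w'"
proof -
  have L: "length w = Suc m" using length_filling[OF W] .
  have d: "distinct w" and st: "set w = {1..Suc m}"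
    and adj: "\<And>t. Suc t < Suc m \<Longrightarrow> w ! t \<le> h (w ! Suc t)"
    using W L unfolding fillings_def by auto
  have "Suc m \<in> set w" using st by simp
  then obtain s where sl: "s < Suc m" and ws: "w ! s = Suc m"
    using L by (metis in_set_conv_nth)
  define w' where "w' = take s w @ drop (Suc s) w"
  have L': "length w' = m" using L sl by (simp add: w'_def)
  have weq: "w = ins s (Suc m) w'"
    using ins_delete[of s w] sl L ws by (simp add: w'_def)
  have nth: "\<And>i. w ! i = (if i < s then w' ! i else if i = s then Suc m else w' ! (i - 1))"
    using weq nth_ins[of s w' "Suc m"] sl L' by simp
  have d': "distinct w'" and fresh: "Suc m \<notin> set w'" using d weq distinct_ins by metis+
  have st': "set w' = {1..m}"
  proof -
    have "insert (Suc m) (set w') = {1..Suc m}" using st weq set_ins by metis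
    then have "set w' = {1..Suc m} - {Suc m}" using fresh by (metis Diff_insert_absorb)
    also have "\<dots> = {1..m}" by auto
    finally show ?thesis .
  qed
  have mem: "\<And>k. k < m \<Longrightarrow> w' ! k \<in> {1..m}" using st' L' by (metis nth_mem)
  have before_slot: "h (w' ! s) = Suc m" if "s < m"
  proof -
    have "Suc m \<le> h (w' ! s)" using adj[of s] that ws nth by simp
    moreover have "h (w' ! s) \<le> Suc m"
      using hessenberg_le[OF H, of "w' ! s"] mem[OF that] by simp
    ultimately show ?thesis by simp
  qed
  have "w' ! t \<le> trunc m h (w' ! Suc t)" if t: "Suc t < m" for t
  proof -
    have small: "w' ! t \<le> m" using mem[of t] t by simp
    consider "Suc t < s" | "Suc t = s" | "s \<le> t" by linarith
    then show ?thesis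
    proof cases
      case 1
      then show ?thesis using adj[of t] nth small t by (simp add: trunc_def)
    next
      case 2
      then show ?thesis using before_slot small t by (simp add: trunc_def)
    next
      case 3
      then show ?thesis using adj[of "Suc t"] nth small t by (simp add: trunc_def)
    qed
  qed
  then have "w' \<in> fillings m (trunc m h)"
    using d' st' L' unfolding fillings_def by auto
  moreover have "s \<in> slots m h w'" using before_slot sl by (simp add: slots_def)
  ultimately show ?thesis using weq that by blast
qed

lemma bij_insert_top:
  assumes H: "hessenberg (Suc m) h"
  shows "bij_betw (\<lambda>(w', s). ins s (Suc m) w')
           (SIGMA w':fillings m (trunc m h). slots m h w') (fillings (Suc m) h)"
  (is "bij_betw ?ins ?S _")
  unfolding bij_betw_def
proof
  show "inj_on ?ins ?S"
  proof (rule inj_onI)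
    fix p1 p2 assume p1: "p1 \<in> ?S" and p2: "p2 \<in> ?S" and eq: "?ins p1 = ?ins p2"
    obtain w1 s1 w2 s2 where p: "p1 = (w1, s1)" "p2 = (w2, s2)" by fastforce
    have W: "w1 \<in> fillings m (trunc m h)" "w2 \<in> fillings m (trunc m h)"
      and S: "s1 \<in> slots m h w1" "s2 \<in> slots m h w2"
      using p1 p2 p by auto
    have fresh: "Suc m \<notin> set w1" "Suc m \<notin> set w2" using W by (auto simp: fillings_def)
    have le: "s1 \<le> length w1" "s2 \<le> length w2"
      using slot_le[OF S(1)] slot_le[OF S(2)] length_filling W by auto
    have "ins s1 (Suc m) w1 = ins s2 (Suc m) w2" using eq p by simp
    then have "s1 = s2 \<and> w1 = w2" using ins_inj[OF fresh le] by blast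
    then show "p1 = p2" using p by simp
  qed
  show "?ins ` ?S = fillings (Suc m) h"
  proof
    show "?ins ` ?S \<subseteq> fillings (Suc m) h" using ins_filling[OF H] by auto
    show "fillings (Suc m) h \<subseteq> ?ins ` ?S"
    proof
      fix w assume "w \<in> fillings (Suc m) h"
      then obtain w' s where "w' \<in> fillings m (trunc m h)" "s \<in> slots m h w'"
        and "w = ins s (Suc m) w'"
        using filling_decompose[OF H] by blast
      then show "w \<in> ?ins ` ?S" by (intro rev_image_eqI[of "(w', s)"]) auto
    qed
  qed
qed

lemma Phi_beyond: "Phi m h w (Suc m) = 0"
  by (simp add: Phi_def)

lemma Bh_Suc:
  assumes H: "hessenberg (Suc m) h"
  shows "\<alpha> \<in> Bh (Suc m) h \<longleftrightarrow>
           \<alpha>(Suc m := 0) \<in> Bh m (trunc m h) \<and> \<alpha> (Suc m) < degtuple (Suc m) h (Suc m)"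
proof -
  have "0 < degtuple (Suc m) h (Suc m)" using degtuple_top[OF H] by simp
  then have last: "\<alpha> (Suc m) \<le> degtuple (Suc m) h (Suc m) - 1 \<longleftrightarrow>
      \<alpha> (Suc m) < degtuple (Suc m) h (Suc m)"
    by linarith
  have split: "(\<forall>i\<in>{1..Suc m}. P i) \<longleftrightarrow> (\<forall>i\<in>{1..m}. P i) \<and> P (Suc m)" for P
    by (auto simp add: atLeastAtMostSuc_conv)
  have lower: "(\<forall>i\<in>{1..m}. (\<alpha>(Suc m := 0)) i \<le> degtuple m (trunc m h) i - 1) \<longleftrightarrow>
      (\<forall>i\<in>{1..m}. \<alpha> i \<le> degtuple (Suc m) h i - 1)"
    using degtuple_trunc[OF H] by auto
  have "\<alpha> \<in> monomials (Suc m) \<longleftrightarrow> \<alpha>(Suc m := 0) \<in> monomials m"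
    by (auto simp: monomials_def)
  then show ?thesis
    unfolding Bh_def mem_Collect_eq split[of "\<lambda>i. \<alpha> i \<le> degtuple (Suc m) h i - 1"] lower last
    by blast
qed

lemma inj_extend_by_rank:
  assumes inj_Phi: "inj_on (Phi m (trunc m h)) (fillings m (trunc m h))"
  shows "inj_on (\<lambda>(w', s). (Phi m (trunc m h) w')(Suc m := rank (slots m h w') s))
           (SIGMA w':fillings m (trunc m h). slots m h w')"
  (is "inj_on ?g ?S")
proof (rule inj_onI)
  let ?P = "Phi m (trunc m h)"
  fix p1 p2 assume p1: "p1 \<in> ?S" and p2: "p2 \<in> ?S" and eq: "?g p1 = ?g p2"
  obtain w1 s1 w2 s2 where p: "p1 = (w1, s1)" "p2 = (w2, s2)" by fastforce
  have W: "w1 \<in> fillings m (trunc m h)" "w2 \<in> fillings m (trunc m h)"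
    and S: "s1 \<in> slots m h w1" "s2 \<in> slots m h w2"
    using p1 p2 p by auto
  have restrict: "(?g (w', s))(Suc m := 0) = ?P w'" for w' s
    using Phi_beyond[of m "trunc m h" w'] by auto
  have "?P w1 = (?g p1)(Suc m := 0)" using restrict p by simp
  also have "\<dots> = (?g p2)(Suc m := 0)" by (simp only: eq)
  also have "\<dots> = ?P w2" using restrict p by simp
  finally have w: "w1 = w2" using inj_Phi W by (metis inj_onD)
  have "rank (slots m h w1) s1 = rank (slots m h w1) s2"
    using fun_cong[OF eq, of "Suc m"] w p by simp
  then have "s1 = s2"
    using bij_rank[OF finite_slots] S w by (metis bij_betw_def inj_onD)
  with w p show "p1 = p2" by simp
qed

lemma bij_extend_by_rank:
  assumes H: "hessenberg (Suc m) h"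
    and IH: "bij_betw (Phi m (trunc m h)) (fillings m (trunc m h)) (Bh m (trunc m h))"
  shows "bij_betw (\<lambda>(w', s). (Phi m (trunc m h) w')(Suc m := rank (slots m h w') s))
           (SIGMA w':fillings m (trunc m h). slots m h w') (Bh (Suc m) h)"
  (is "bij_betw ?g ?S _")
proof -
  let ?P = "Phi m (trunc m h)"
  have restrict: "(?g (w', s))(Suc m := 0) = ?P w'" for w' s
    using Phi_beyond[of m "trunc m h" w'] by auto
  have "?g ` ?S \<subseteq> Bh (Suc m) h"
  proof
    fix \<beta> assume "\<beta> \<in> ?g ` ?S"
    then obtain w' s where W: "w' \<in> fillings m (trunc m h)" and S: "s \<in> slots m h w'"
      and \<beta>: "\<beta> = ?g (w', s)"
      by blast
    have "?P w' \<in> Bh m (trunc m h)" using bij_betwE[OF IH] W by blast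
    moreover have "rank (slots m h w') s < degtuple (Suc m) h (Suc m)"
      using bij_betwE[OF bij_rank[OF finite_slots]] S card_slots[OF H W] by fastforce
    ultimately show "\<beta> \<in> Bh (Suc m) h"
      using restrict[of w' s] \<beta> by (simp add: Bh_Suc[OF H])
  qed
  moreover have "Bh (Suc m) h \<subseteq> ?g ` ?S"
  proof
    fix \<alpha> assume "\<alpha> \<in> Bh (Suc m) h"
    then have low: "\<alpha>(Suc m := 0) \<in> Bh m (trunc m h)"
      and top: "\<alpha> (Suc m) < degtuple (Suc m) h (Suc m)"
      by (simp_all add: Bh_Suc[OF H])
    obtain w' where W: "w' \<in> fillings m (trunc m h)" and w': "?P w' = \<alpha>(Suc m := 0)"
      using low IH by (metis bij_betw_imp_surj_on imageE)
    have "\<alpha> (Suc m) \<in> rank (slots m h w') ` slots m h w'"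
      using top card_slots[OF H W] bij_betw_imp_surj_on[OF bij_rank[OF finite_slots]] by auto
    then obtain s where S: "s \<in> slots m h w'" and r: "rank (slots m h w') s = \<alpha> (Suc m)"
      by (metis imageE)
    have "?g (w', s) = \<alpha>" using w' r by auto
    then show "\<alpha> \<in> ?g ` ?S" using W S by (intro rev_image_eqI[of "(w', s)"]) auto
  qed
  ultimately show ?thesis
    using inj_extend_by_rank IH by (simp add: bij_betw_def)
qed

text \<open>The bijection, by induction on n: the insertion bijection composed with Phi is the
  encoding of the previous lemma.\<close>
lemma bij_Phi_Bh: "hessenberg n h \<Longrightarrow> bij_betw (Phi n h) (fillings n h) (Bh n h)"
proof (induction n arbitrary: h)
  case 0
  have "fillings 0 h = {[]}" by (auto simp: fillings_def)
  moreover have "Bh 0 h = {\<lambda>_. 0}" by (auto simp: Bh_def monomials_def)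
  moreover have "Phi 0 h [] = (\<lambda>_. 0)" by (auto simp: Phi_def)
  ultimately show ?case by (simp add: bij_betw_def)
next
  case (Suc m)
  let ?S = "SIGMA w':fillings m (trunc m h). slots m h w'"
  have IH: "bij_betw (Phi m (trunc m h)) (fillings m (trunc m h)) (Bh m (trunc m h))"
    using Suc.IH hessenberg_trunc[OF Suc.prems] by blast
  let ?ins = "\<lambda>(w', s). ins s (Suc m) w'"
  let ?g = "\<lambda>(w', s). (Phi m (trunc m h) w')(Suc m := rank (slots m h w') s)"
  have "(Phi (Suc m) h \<circ> ?ins) p = ?g p" if "p \<in> ?S" for p
    using Phi_ins[OF Suc.prems] that by auto
  then have "bij_betw (Phi (Suc m) h \<circ> ?ins) ?S (Bh (Suc m) h) = bij_betw ?g ?S (Bh (Suc m) h)"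
    by (rule bij_betw_cong)
  then have "bij_betw (Phi (Suc m) h \<circ> ?ins) ?S (Bh (Suc m) h)"
    using bij_extend_by_rank[OF Suc.prems IH] by blast
  then show ?case
    using bij_betw_comp_iff[OF bij_insert_top[OF Suc.prems]] by blast
qed

text \<open>The degree of Phi w is the number of dimension pairs of w: group them by their
  larger entry, which lies in {2..n}.\<close>
lemma mdeg_Phi:
  assumes W: "w \<in> fillings n h"
  shows "mdeg n (Phi n h w) = card (dimpairs h w)"
proof -
  let ?D = "dimpairs h w"
  have larger: "snd p \<in> {2..n}" if "p \<in> ?D" for p
    using dimpair_entries[OF that] W by (force simp: fillings_def)
  have "?D \<subseteq> set w \<times> set w"
  proof
    fix p assume "p \<in> ?D"
    then show "p \<in> set w \<times> set w" using dimpair_entries[of p h w] by (cases p) simp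
  qed
  then have fin: "finite ?D" by (rule finite_subset) simp
  have "card ?D = (\<Sum>p\<in>?D. 1 :: nat)" by (rule card_eq_sum)
  also have "\<dots> = (\<Sum>j\<in>{1..n}. \<Sum>p\<in>{p \<in> ?D. snd p = j}. 1 :: nat)"
    using larger by (intro sum.group[symmetric] fin) force+
  also have "\<dots> = (\<Sum>j\<in>{1..n}. card {p \<in> ?D. snd p = j})"
    by (simp only: card_eq_sum)
  also have "\<dots> = (\<Sum>j\<in>{1..n}. Phi n h w j)"
  proof (rule sum.cong)
    fix j assume "j \<in> {1..n}"
    show "card {p \<in> ?D. snd p = j} = Phi n h w j"
    proof (cases "j = 1")
      case True
      then have "{p \<in> ?D. snd p = j} = {}" using larger by fastforce
      then have "card {p \<in> ?D. snd p = j} = 0" by (simp only: card.empty)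
      then show ?thesis using True by (simp add: Phi_def)
    next
      case False
      then show ?thesis using \<open>j \<in> {1..n}\<close> by (simp add: Phi_def)
    qed
  qed simp
  finally show ?thesis by (simp add: mdeg_def)
qed

theorem mainTheorem19:
  fixes n :: nat and h :: "nat \<Rightarrow> nat"
  assumes "hessenberg n h"
  shows "bij_betw (Phi n h) (fillings n h) (Ah n h) \<and> Ah n h = Bh n h \<and>
         (\<forall>w\<in>fillings n h. mdeg n (Phi n h w) = card (dimpairs h w))"
proof -
  have bij: "bij_betw (Phi n h) (fillings n h) (Bh n h)" by (rule bij_Phi_Bh[OF assms])
  then have "Ah n h = Bh n h" unfolding Ah_def bij_betw_def by simp
  with bij show ?thesis using mdeg_Phi by simp
qed

end
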